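(* Let $n\ge 2$. The $\{2\}$-limit set $\Lambda_{\mathrm{Iso}_2}$ of $\rho_n(\mathrm{SL}(2,\mathbb C))<\mathrm{Sp}(2n,\mathbb R)$ is maximally antipodal in $\mathrm{Iso}_2(\mathbb R^{2n},\omega)$, and the $\Theta_{\rm even}$-limit set $\Lambda_{\rm even}\subset\mathcal F_{\rm even}$ of $\rho_n(\mathrm{SL}(2,\mathbb C))$ is maximally antipodal in $\mathcal F_{\rm even}$.
   Context: $\omega(x,y)=x^TJy$ with $Je_i=(-1)^ie_{2n-i+1}$; $\mathrm{Sp}(2n,\mathbb R)$ is its symmetry group. $\mathrm{Iso}_2(\mathbb R^{2n},\omega)$ is the space of $\omega$-isotropic 2-planes, with $V,W$ antipodal iff $V\oplus W^{\perp_\omega}=\mathbb R^{2n}$. $\Theta_{\rm even}$ is the set of even integers in $\{1,\dots,n\}$ (labelling simple roots $\alpha_i=\lambda_i-\lambda_{i+1}$, $i<n$, $\alpha_n=2\lambda_n$), and $\mathcal F_{\rm even}$ is the space of isotropic $\Theta_{\rm even}$-flags $(V^i)_{i\in\Theta_{\rm even}}$ (nested $\omega$-isotropic, $\dim V^i=i$), with $V,W$ antipodal iff $V^i\oplus(W^i)^{\perp_\omega}=\mathbb R^{2n}$ for all $i\in\Theta_{\rm even}$. A subset is maximally antipodal if its distinct points are pairwise antipodal and every point of the ambient flag manifold is non-antipodal to some point of it. The representation $\rho_n:\mathrm{SL}(2,\mathbb C)\to\mathrm{Sp}(2n,\mathbb R)$: for $n$ even, the irreducible $n$-dimensional complex representation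 (landing in $\mathrm{Sp}(n,\mathbb C)$), viewed in $\mathrm{Sp}(2n,\mathbb R)$ via $\mathbb C^n\cong\mathbb R^{2n}$ and a real symplectic form conjugated to $\omega$; for $n$ odd, $\rho_{n-1}$ followed by $\begin{bmatrix}A&B\\C&D\end{bmatrix}\mapsto\begin{bmatrix}A&0&B\\0&I_2&0\\C&0&D\end{bmatrix}$. The limit sets are those of $\rho_n(\Gamma)$ for any uniform lattice $\Gamma<\mathrm{SL}(2,\mathbb C)$, which is $\Theta_{\rm even}$-Anosov (hence $\{2\}$-Anosov); they are the images of the strongly dynamics preserving equivariant boundary maps. *)

theory Defs
  imports "HOL-Analysis.Analysis" "HOL-Library.Function_Algebras"
begin

definition rscale :: "real \<Rightarrow> (nat \<Rightarrow> real) \<Rightarrow> (nat \<Rightarrow> real)" where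
  "rscale c v = (\<lambda>i. c * v i)"

interpretation rv: vector_space rscale
  by unfold_locales (auto simp: rscale_def fun_eq_iff algebra_simps)

definition Rvec :: "nat \<Rightarrow> (nat \<Rightarrow> real) set" where
  "Rvec N = {v. \<forall>i. (i < 1 \<or> i > N) \<longrightarrow> v i = 0}"

text \<open>omega(x,y) = x^T J y with J e_i = (-1)^i e_(2n-i+1), i.e. J_(2n+1-i,i) = (-1)^i.\<close>
definition omega :: "nat \<Rightarrow> (nat \<Rightarrow> real) \<Rightarrow> (nat \<Rightarrow> real) \<Rightarrow> real" where
  "omega n x y = (\<Sum>i\<in>{1..2*n}. x (2*n+1-i) * (-1)^i * y i)"

definition omega_perp :: "nat \<Rightarrow> (nat \<Rightarrow> real) set \<Rightarrow> (nat \<Rightarrow> real) set" where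
  "omega_perp n W = {x \<in> Rvec (2*n). \<forall>y\<in>W. omega n x y = 0}"

definition isotropic_subspace :: "nat \<Rightarrow> nat \<Rightarrow> (nat \<Rightarrow> real) set \<Rightarrow> bool" where
  "isotropic_subspace n d V \<longleftrightarrow> rv.subspace V \<and> V \<subseteq> Rvec (2*n) \<and> rv.dim V = d
     \<and> (\<forall>x\<in>V. \<forall>y\<in>V. omega n x y = 0)"

definition direct_sum_full :: "nat \<Rightarrow> (nat \<Rightarrow> real) set \<Rightarrow> (nat \<Rightarrow> real) set \<Rightarrow> bool" where
  "direct_sum_full n V W' \<longleftrightarrow> V \<inter> W' = {0} \<and> {v + w | v w. v \<in> V \<and> w \<in> W'} = Rvec (2*n)"

definition Iso2 :: "nat \<Rightarrow> (nat \<Rightarrow> real) set set" where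
  "Iso2 n = {V. isotropic_subspace n 2 V}"

definition antipodal_Iso2 :: "nat \<Rightarrow> (nat \<Rightarrow> real) set \<Rightarrow> (nat \<Rightarrow> real) set \<Rightarrow> bool" where
  "antipodal_Iso2 n V W \<longleftrightarrow> direct_sum_full n V (omega_perp n W)"

definition Theta_even :: "nat \<Rightarrow> nat set" where
  "Theta_even n = {i. even i \<and> 1 \<le> i \<and> i \<le> n}"

definition F_even :: "nat \<Rightarrow> (nat \<Rightarrow> (nat \<Rightarrow> real) set) set" where
  "F_even n = {F. (\<forall>i\<in>Theta_even n. isotropic_subspace n i (F i))
      \<and> (\<forall>i\<in>Theta_even n. \<forall>j\<in>Theta_even n. i \<le> j \<longrightarrow> F i \<subseteq> F j)
      \<and> (\<forall>i. i \<notin> Theta_even n \<longrightarrow> F i = {})}"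

definition antipodal_even :: "nat \<Rightarrow> (nat \<Rightarrow> (nat \<Rightarrow> real) set) \<Rightarrow> (nat \<Rightarrow> (nat \<Rightarrow> real) set) \<Rightarrow> bool" where
  "antipodal_even n F G \<longleftrightarrow> (\<forall>i\<in>Theta_even n. direct_sum_full n (F i) (omega_perp n (G i)))"

definition maximally_antipodal :: "'a set \<Rightarrow> ('a \<Rightarrow> 'a \<Rightarrow> bool) \<Rightarrow> 'a set \<Rightarrow> bool" where
  "maximally_antipodal X A L \<longleftrightarrow> L \<subseteq> X
     \<and> (\<forall>a\<in>L. \<forall>b\<in>L. a \<noteq> b \<longrightarrow> A a b)
     \<and> (\<forall>x\<in>X. \<exists>a\<in>L. \<not> A x a)"

text \<open>Model of the irreducible m-dimensional complex representation of SL(2,C):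
  C^m = Sym^(m-1) C^2 with monomial basis x^(m-1-k) y^k (k < m); a coefficient vector is
  a function nat => complex supported on {0..<m}.  The matrix [[a,b],[c,d]] acts by
  p(x,y) |-> p(a x + b y, c x + d y).\<close>

definition Cvec :: "nat \<Rightarrow> (nat \<Rightarrow> complex) set" where
  "Cvec m = {u. \<forall>i\<ge>m. u i = 0}"

definition SL2C :: "(complex \<times> complex \<times> complex \<times> complex) set" where
  "SL2C = {(a,b,c,d). a*d - b*c = 1}"

definition sym_coef :: "nat \<Rightarrow> complex \<times> complex \<times> complex \<times> complex \<Rightarrow> nat \<Rightarrow> nat \<Rightarrow> complex" where
  "sym_coef N g k j = (case g of (a,b,c,d) \<Rightarrow>
     (\<Sum>s\<in>{0..j}. if s \<le> N - k \<and> j - s \<le> k then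
        of_nat (N - k choose s) * a ^ (N - k - s) * b ^ s
        * of_nat (k choose (j - s)) * c ^ (k - (j - s)) * d ^ (j - s) else 0))"

definition sym_act :: "nat \<Rightarrow> complex \<times> complex \<times> complex \<times> complex \<Rightarrow> (nat \<Rightarrow> complex) \<Rightarrow> (nat \<Rightarrow> complex)" where
  "sym_act m g u = (\<lambda>j. if j < m then (\<Sum>k<m. u k * sym_coef (m - 1) g k j) else 0)"

text \<open>The invariant complex symplectic form on Sym^(m-1) C^2 (m even).\<close>
definition Omega :: "nat \<Rightarrow> (nat \<Rightarrow> complex) \<Rightarrow> (nat \<Rightarrow> complex) \<Rightarrow> complex" where
  "Omega m u w = (\<Sum>k<m. (-1)^k / of_nat ((m - 1) choose k) * u k * w (m - 1 - k))"

definition symplectic_identification :: "nat \<Rightarrow> complex \<Rightarrow> ((nat \<Rightarrow> complex) \<Rightarrow> (nat \<Rightarrow> real)) \<Rightarrow> bool" where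
  "symplectic_identification m c T \<longleftrightarrow> c \<noteq> 0 \<and> bij_betw T (Cvec m) (Rvec (2*m))
     \<and> (\<forall>u\<in>Cvec m. \<forall>w\<in>Cvec m. T (u + w) = T u + T w)
     \<and> (\<forall>r::real. \<forall>u\<in>Cvec m. T (\<lambda>i. of_real r * u i) = rscale r (T u))
     \<and> (\<forall>u\<in>Cvec m. \<forall>w\<in>Cvec m. omega m (T u) (T w) = Re (c * Omega m u w))"

definition rho_even_act :: "nat \<Rightarrow> ((nat \<Rightarrow> complex) \<Rightarrow> (nat \<Rightarrow> real)) \<Rightarrow> complex \<times> complex \<times> complex \<times> complex
     \<Rightarrow> (nat \<Rightarrow> real) \<Rightarrow> (nat \<Rightarrow> real)" where
  "rho_even_act m T g x = (if x \<in> Rvec (2*m) then T (sym_act m g (the_inv_into (Cvec m) T x)) else 0)"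

text \<open>Block embedding Sp(2n-2) -> Sp(2n), [[A,B],[C,D]] |-> [[A,0,B],[0,I_2,0],[C,0,D]]:
  coordinates 1..n-1 and n+2..2n of R^(2n) carry R^(2n-2), coordinates n, n+1 are fixed.\<close>
definition block_proj :: "nat \<Rightarrow> (nat \<Rightarrow> real) \<Rightarrow> (nat \<Rightarrow> real)" where
  "block_proj n x = (\<lambda>i. if 1 \<le> i \<and> i \<le> n - 1 then x i
                         else if n \<le> i \<and> i \<le> 2*n - 2 then x (i + 2) else 0)"

definition block_incl :: "nat \<Rightarrow> (nat \<Rightarrow> real) \<Rightarrow> (nat \<Rightarrow> real)" where
  "block_incl n y = (\<lambda>i. if 1 \<le> i \<and> i \<le> n - 1 then y i
                         else if n + 2 \<le> i \<and> i \<le> 2*n then y (i - 2) else 0)"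

definition block_mid :: "nat \<Rightarrow> (nat \<Rightarrow> real) \<Rightarrow> (nat \<Rightarrow> real)" where
  "block_mid n x = (\<lambda>i. if i = n \<or> i = n + 1 then x i else 0)"

definition block_embed :: "nat \<Rightarrow> ((nat \<Rightarrow> real) \<Rightarrow> (nat \<Rightarrow> real)) \<Rightarrow> (nat \<Rightarrow> real) \<Rightarrow> (nat \<Rightarrow> real)" where
  "block_embed n h x = (if x \<in> Rvec (2*n) then block_incl n (h (block_proj n x)) + block_mid n x else 0)"

definition rho_act :: "nat \<Rightarrow> ((nat \<Rightarrow> complex) \<Rightarrow> (nat \<Rightarrow> real)) \<Rightarrow> complex \<times> complex \<times> complex \<times> complex
     \<Rightarrow> (nat \<Rightarrow> real) \<Rightarrow> (nat \<Rightarrow> real)" where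
  "rho_act n T g = (if even n then rho_even_act n T g else block_embed n (rho_even_act (n - 1) T g))"

text \<open>The Theta_even-limit set: image of the equivariant boundary map CP^1 -> F_even, i.e. the
  rho_n(SL(2,C))-orbit of the attracting flag xi0 of rho_n(diag(lambda, 1/lambda)), lambda > 1.
  For m = 2*(n div 2), xi0^i is the real subspace underlying the complex span of the top
  i/2 eigenvectors x^(m-1), ..., x^(m-i/2) y^(i/2-1).\<close>
definition xi0 :: "nat \<Rightarrow> ((nat \<Rightarrow> complex) \<Rightarrow> (nat \<Rightarrow> real)) \<Rightarrow> nat \<Rightarrow> (nat \<Rightarrow> real) set" where
  "xi0 n T i = (if i \<in> Theta_even n then
      (let W = T ` {u \<in> Cvec (2 * (n div 2)). \<forall>j\<ge>i div 2. u j = 0}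
       in if even n then W else block_incl n ` W)
     else {})"

definition Lambda_even :: "nat \<Rightarrow> ((nat \<Rightarrow> complex) \<Rightarrow> (nat \<Rightarrow> real)) \<Rightarrow> (nat \<Rightarrow> (nat \<Rightarrow> real) set) set" where
  "Lambda_even n T = {(\<lambda>i. rho_act n T g ` xi0 n T i) | g. g \<in> SL2C}"

definition Lambda_Iso2 :: "nat \<Rightarrow> ((nat \<Rightarrow> complex) \<Rightarrow> (nat \<Rightarrow> real)) \<Rightarrow> (nat \<Rightarrow> real) set set" where
  "Lambda_Iso2 n T = (\<lambda>F. F 2) ` Lambda_even n T"

end

(* Write m = 2 (n div 2) and N = m - 1, so that C^m = Sym^N C^2 is the space of binary forms of
   degree N with its SL(2,C)-invariant symplectic form Omega.  The points of both limit sets are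
   the flags of real subspaces underlying
     F_g^r = { forms divisible by (a x + b y)^(N-r+1) },   g = (a,b,c,d),
   which depend only on the point [a:b] of CP^1.  Two distinct points are moved by one element of
   SL(2,C) (Bruhat decomposition) to [1:0] and [0:1]; there Omega pairs the two standard flags
   diagonally, Omega(s, weyl t) = sum_k s_k t_k / (N choose k), so F_g^r meets the
   omega-complement of F_h^r trivially and both together span.  For maximality, a nonzero vector
   v of an isotropic 2-plane pairs with (a x + b y)^N through a binary form of degree N in (a,b),
   which vanishes at some point of CP^1 by the fundamental theorem of algebra; v is then
   omega-orthogonal to the corresponding point F_g^1 of the limit set.  For n odd everything
   happens inside the block R^(2n-2) on which rho_n acts through rho_(n-1). *)

theory Submission
  imports Defs "HOL-Computational_Algebra.Fundamental_Theorem_Algebra"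
begin

section \<open>The action of SL(2,C) on binary forms\<close>

lemma coeff_linear_poly_power_if:
  fixes \<alpha> \<beta> :: "'a :: comm_semiring_1"
  shows "coeff ([:\<alpha>, \<beta>:] ^ p) s = (if s \<le> p then of_nat (p choose s) * \<alpha> ^ (p - s) * \<beta> ^ s else 0)"
proof (cases "s \<le> p")
  case True
  then show ?thesis by (simp add: coeff_linear_poly_power mult_ac)
next
  case False
  have "degree ([:\<alpha>, \<beta>:] ^ p) \<le> p * 1"
    by (rule order_trans[OF degree_power_le]) (simp add: degree_pCons_le)
  with False show ?thesis by (simp add: coeff_eq_0)
qed

lemma poly_eq_sum_coeff_lessThan:
  fixes p :: "'a :: comm_semiring_1 poly"
  assumes "degree p \<le> N"
  shows "poly p y = (\<Sum>j<Suc N. coeff p j * y ^ j)"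
proof -
  have "poly p y = (\<Sum>j\<le>degree p. coeff p j * y ^ j)" by (rule poly_altdef)
  also have "\<dots> = (\<Sum>j\<le>N. coeff p j * y ^ j)"
    using assms by (intro sum.mono_neutral_left) (auto simp: coeff_eq_0)
  finally show ?thesis by (simp add: lessThan_Suc_atMost)
qed

lemma coeff_linear_power_product:
  fixes a b c d x :: complex
  assumes "k \<le> N" "j \<le> N"
  shows "coeff ([:a*x, b:] ^ (N - k) * [:c*x, d:] ^ k) j = sym_coef N (a,b,c,d) k j * x ^ (N - j)"
proof -
  have "coeff ([:a*x, b:] ^ (N - k) * [:c*x, d:] ^ k) j
      = (\<Sum>s\<le>j. coeff ([:a*x, b:] ^ (N - k)) s * coeff ([:c*x, d:] ^ k) (j - s))"
    by (rule coeff_mult)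
  also have "\<dots> = (\<Sum>s\<le>j. (if s \<le> N - k \<and> j - s \<le> k then
      of_nat (N - k choose s) * a ^ (N - k - s) * b ^ s
      * of_nat (k choose (j - s)) * c ^ (k - (j - s)) * d ^ (j - s) else 0) * x ^ (N - j))"
  proof (intro sum.cong refl)
    fix s assume s: "s \<in> {..j}"
    show "coeff ([:a*x, b:] ^ (N - k)) s * coeff ([:c*x, d:] ^ k) (j - s)
        = (if s \<le> N - k \<and> j - s \<le> k then
            of_nat (N - k choose s) * a ^ (N - k - s) * b ^ s
            * of_nat (k choose (j - s)) * c ^ (k - (j - s)) * d ^ (j - s) else 0) * x ^ (N - j)"
    proof (cases "s \<le> N - k \<and> j - s \<le> k")
      case True
      then have e: "N - j = (N - k - s) + (k - (j - s))" using s assms by auto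
      show ?thesis using True unfolding coeff_linear_poly_power_if e power_add
        by (simp add: power_mult_distrib mult_ac)
    qed (auto simp: coeff_linear_poly_power_if)
  qed
  also have "\<dots> = sym_coef N (a,b,c,d) k j * x ^ (N - j)"
    by (simp add: sym_coef_def sum_distrib_right atLeast0AtMost)
  finally show ?thesis .
qed

lemma sum_sym_coef_monomials:
  fixes a b c d x y :: complex
  assumes "k \<le> N"
  shows "(\<Sum>j<Suc N. sym_coef N (a,b,c,d) k j * x ^ (N - j) * y ^ j)
       = (a*x + b*y) ^ (N - k) * (c*x + d*y) ^ k"
proof -
  define p where "p = [:a*x, b:] ^ (N - k) * [:c*x, d:] ^ k"
  have "degree p \<le> degree ([:a*x, b:] ^ (N - k)) + degree ([:c*x, d:] ^ k)"
    unfolding p_def by (rule degree_mult_le)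
  also have "\<dots> \<le> (N - k) * 1 + k * 1"
    by (intro add_mono order_trans[OF degree_power_le]) (auto simp: degree_pCons_le)
  finally have deg: "degree p \<le> N" using assms by simp
  have "(a*x + b*y) ^ (N - k) * (c*x + d*y) ^ k = poly p y"
    by (simp add: p_def poly_power algebra_simps)
  also have "\<dots> = (\<Sum>j<Suc N. coeff p j * y ^ j)"
    using deg by (rule poly_eq_sum_coeff_lessThan)
  also have "\<dots> = (\<Sum>j<Suc N. sym_coef N (a,b,c,d) k j * x ^ (N - j) * y ^ j)"
    using assms by (intro sum.cong refl) (simp add: p_def coeff_linear_power_product)
  finally show ?thesis ..
qed

definition binary_form :: "nat \<Rightarrow> (nat \<Rightarrow> complex) \<Rightarrow> complex \<Rightarrow> complex \<Rightarrow> complex" where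
  "binary_form N u x y = (\<Sum>k<Suc N. u k * x ^ (N - k) * y ^ k)"

definition mat_mult :: "complex \<times> complex \<times> complex \<times> complex
    \<Rightarrow> complex \<times> complex \<times> complex \<times> complex \<Rightarrow> complex \<times> complex \<times> complex \<times> complex" where
  "mat_mult g h = (case g of (a,b,c,d) \<Rightarrow> case h of (a',b',c',d') \<Rightarrow>
     (a*a' + b*c', a*b' + b*d', c*a' + d*c', c*b' + d*d'))"

lemma binary_form_sym_act:
  "binary_form N (sym_act (Suc N) (a,b,c,d) u) x y = binary_form N u (a*x + b*y) (c*x + d*y)"
proof -
  have "binary_form N (sym_act (Suc N) (a,b,c,d) u) x y
      = (\<Sum>j<Suc N. \<Sum>k<Suc N. u k * (sym_coef N (a,b,c,d) k j * x ^ (N - j) * y ^ j))"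
    by (simp del: sum.lessThan_Suc add: binary_form_def sym_act_def sum_distrib_right mult.assoc)
  also have "\<dots> = (\<Sum>k<Suc N. u k * (\<Sum>j<Suc N. sym_coef N (a,b,c,d) k j * x ^ (N - j) * y ^ j))"
    by (subst sum.swap) (simp only: sum_distrib_left)
  also have "\<dots> = (\<Sum>k<Suc N. u k * ((a*x + b*y) ^ (N - k) * (c*x + d*y) ^ k))"
    by (intro sum.cong refl) (subst sum_sym_coef_monomials, auto)
  finally show ?thesis by (simp add: binary_form_def mult_ac)
qed

lemma Cvec_eqI_binary_form:
  assumes "u \<in> Cvec (Suc N)" "w \<in> Cvec (Suc N)" "\<And>y. binary_form N u 1 y = binary_form N w 1 y"
  shows "u = w"
proof -
  have "\<forall>y. (\<Sum>k\<le>N. (u k - w k) * y ^ k) = 0"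
    using assms(3) by (simp add: binary_form_def lessThan_Suc_atMost algebra_simps sum_subtractf)
  then have "\<forall>k\<le>N. u k = w k" by (subst (asm) polyfun_eq_0) simp
  with assms(1,2) show ?thesis
    by (auto simp: Cvec_def fun_eq_iff) (metis not_less_eq_eq)
qed

lemma sym_act_in_Cvec: "sym_act m g u \<in> Cvec m"
  by (simp add: sym_act_def Cvec_def)

lemma sym_act_sym_act:
  "sym_act (Suc N) g (sym_act (Suc N) h u) = sym_act (Suc N) (mat_mult h g) u"
proof -
  obtain a b c d where g: "g = (a,b,c,d)" by (cases g) auto
  obtain a' b' c' d' where h: "h = (a',b',c',d')" by (cases h) auto
  show ?thesis
    by (rule Cvec_eqI_binary_form[OF sym_act_in_Cvec sym_act_in_Cvec])
      (simp add: g h mat_mult_def binary_form_sym_act algebra_simps)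
qed

lemma sym_act_id: "u \<in> Cvec (Suc N) \<Longrightarrow> sym_act (Suc N) (1,0,0,1) u = u"
  by (rule Cvec_eqI_binary_form[OF sym_act_in_Cvec]) (simp_all add: binary_form_sym_act)

lemma sym_act_inverse:
  assumes "(a,b,c,d) \<in> SL2C" "u \<in> Cvec (Suc N)"
  shows "sym_act (Suc N) (a,b,c,d) (sym_act (Suc N) (d,-b,-c,a) u) = u"
  using assms by (simp add: sym_act_sym_act mat_mult_def SL2C_def algebra_simps sym_act_id)

lemma sym_act_add: "sym_act m g (u + w) = sym_act m g u + sym_act m g w"
  by (simp add: sym_act_def fun_eq_iff sum.distrib algebra_simps)

lemma sym_act_scale: "sym_act m g (\<lambda>i. z * u i) = (\<lambda>i. z * sym_act m g u i)"
  by (simp add: sym_act_def fun_eq_iff sum_distrib_left algebra_simps)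

lemma sym_act_zero: "sym_act m g 0 = 0"
  by (simp add: sym_act_def fun_eq_iff)

lemma Omega_scale_right: "Omega m u (\<lambda>i. z * w i) = z * Omega m u w"
  by (simp add: Omega_def sum_distrib_left algebra_simps)

definition power_form :: "nat \<Rightarrow> complex \<Rightarrow> complex \<Rightarrow> nat \<Rightarrow> complex" where
  "power_form N \<alpha> \<beta> = (\<lambda>k. if k < Suc N then of_nat (N choose k) * \<alpha> ^ (N - k) * \<beta> ^ k else 0)"

lemma power_form_in_Cvec: "power_form N \<alpha> \<beta> \<in> Cvec (Suc N)"
  by (simp add: power_form_def Cvec_def)

lemma binary_form_power_form: "binary_form N (power_form N \<alpha> \<beta>) x y = (\<alpha>*x + \<beta>*y) ^ N"
proof -
  have "(\<alpha>*x + \<beta>*y) ^ N = (\<beta>*y + \<alpha>*x) ^ N" by (simp add: add.commute)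
  also have "\<dots> = (\<Sum>k\<le>N. of_nat (N choose k) * (\<beta>*y) ^ k * (\<alpha>*x) ^ (N - k))"
    by (rule binomial_ring)
  finally show ?thesis
    by (simp add: binary_form_def power_form_def lessThan_Suc_atMost power_mult_distrib mult_ac)
qed

lemma sym_act_power_form:
  "sym_act (Suc N) (a,b,c,d) (power_form N \<alpha> \<beta>) = power_form N (\<alpha>*a + \<beta>*c) (\<alpha>*b + \<beta>*d)"
  by (rule Cvec_eqI_binary_form[OF sym_act_in_Cvec power_form_in_Cvec])
    (simp add: binary_form_sym_act binary_form_power_form algebra_simps)

lemma Omega_power_form:
  "Omega (Suc N) (power_form N \<alpha> \<beta>) (power_form N \<gamma> \<delta>) = (\<alpha>*\<delta> - \<beta>*\<gamma>) ^ N"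
proof -
  have "(\<alpha>*\<delta> - \<beta>*\<gamma>) ^ N = (-(\<beta>*\<gamma>) + \<alpha>*\<delta>) ^ N" by simp
  also have "\<dots> = (\<Sum>k\<le>N. of_nat (N choose k) * (-(\<beta>*\<gamma>)) ^ k * (\<alpha>*\<delta>) ^ (N - k))"
    by (rule binomial_ring)
  also have "\<dots> = (\<Sum>k<Suc N. (-1) ^ k / of_nat (N choose k)
                     * power_form N \<alpha> \<beta> k * power_form N \<gamma> \<delta> (N - k))"
    unfolding lessThan_Suc_atMost
  proof (intro sum.cong refl)
    fix k assume k: "k \<in> {..N}"
    then have "(of_nat (N choose k) :: complex) \<noteq> 0" "N - (N - k) = k" by auto
    with k show "of_nat (N choose k) * (-(\<beta>*\<gamma>)) ^ k * (\<alpha>*\<delta>) ^ (N - k)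
      = (-1) ^ k / of_nat (N choose k) * power_form N \<alpha> \<beta> k * power_form N \<gamma> \<delta> (N - k)"
      by (simp add: power_form_def binomial_symmetric[symmetric] power_mult_distrib field_simps
          power_minus[of "\<beta>*\<gamma>"])
  qed
  finally show ?thesis by (simp add: Omega_def)
qed

lemma Omega_power_form_right:
  "Omega (Suc N) u (power_form N \<alpha> \<beta>) = (\<Sum>k<Suc N. (-1) ^ k * u k * \<alpha> ^ k * \<beta> ^ (N - k))"
  unfolding Omega_def
proof (intro sum.cong refl)
  fix k assume "k \<in> {..<Suc N}"
  then have k: "k \<le> N" "N - (N - k) = k" by auto
  then have "(of_nat (N choose k) :: complex) \<noteq> 0" by simp
  with k show "(-1) ^ k / of_nat (Suc N - 1 choose k) * u k * power_form N \<alpha> \<beta> (Suc N - 1 - k)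
      = (-1) ^ k * u k * \<alpha> ^ k * \<beta> ^ (N - k)"
    by (simp add: power_form_def binomial_symmetric[symmetric] field_simps)
qed

definition Omega_coeff :: "nat \<Rightarrow> nat \<Rightarrow> nat \<Rightarrow> complex" where
  "Omega_coeff N k l = (if l = N - k then (-1) ^ k / of_nat (N choose k) else 0)"

definition Omega_pullback_coeff ::
    "nat \<Rightarrow> complex \<times> complex \<times> complex \<times> complex \<Rightarrow> nat \<Rightarrow> nat \<Rightarrow> complex" where
  "Omega_pullback_coeff N g k l =
     (\<Sum>j<Suc N. (-1) ^ j / of_nat (N choose j) * sym_coef N g k j * sym_coef N g l (N - j))"

lemma Omega_eq_sum_Omega_coeff:
  "Omega (Suc N) u w = (\<Sum>k<Suc N. \<Sum>l<Suc N. u k * w l * Omega_coeff N k l)"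
  unfolding Omega_def
proof (intro sum.cong refl)
  fix k assume k: "k \<in> {..<Suc N}"
  have "(\<Sum>l<Suc N. u k * w l * Omega_coeff N k l)
      = (\<Sum>l<Suc N. if l = N - k then u k * w l * ((-1) ^ k / of_nat (N choose k)) else 0)"
    by (intro sum.cong refl) (simp add: Omega_coeff_def)
  also have "\<dots> = u k * w (N - k) * ((-1) ^ k / of_nat (N choose k))"
    using k by (simp del: sum.lessThan_Suc add: sum.delta')
  finally show "(-1) ^ k / of_nat (Suc N - 1 choose k) * u k * w (Suc N - 1 - k)
      = (\<Sum>l<Suc N. u k * w l * Omega_coeff N k l)"
    by simp
qed

lemma Omega_sym_act_eq_sum_pullback_coeff:
  "Omega (Suc N) (sym_act (Suc N) g u) (sym_act (Suc N) g w)
   = (\<Sum>k<Suc N. \<Sum>l<Suc N. u k * w l * Omega_pullback_coeff N g k l)"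
proof -
  define t where "t j k l = u k * w l * ((-1) ^ j / of_nat (N choose j)
                              * sym_coef N g k j * sym_coef N g l (N - j))" for j k l
  have "Omega (Suc N) (sym_act (Suc N) g u) (sym_act (Suc N) g w)
      = (\<Sum>j<Suc N. \<Sum>k<Suc N. \<Sum>l<Suc N. t j k l)"
    unfolding Omega_def t_def
    by (intro sum.cong refl)
      (simp del: sum.lessThan_Suc
        add: sym_act_def sum_product sum_distrib_left sum_divide_distrib mult_ac)
  also have "\<dots> = (\<Sum>k<Suc N. \<Sum>l<Suc N. \<Sum>j<Suc N. t j k l)"
    by (subst sum.swap) (simp only: sum.swap[of "\<lambda>j l. t j _ l"])
  also have "\<dots> = (\<Sum>k<Suc N. \<Sum>l<Suc N. u k * w l * Omega_pullback_coeff N g k l)"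
    by (simp only: t_def Omega_pullback_coeff_def sum_distrib_left)
  finally show ?thesis .
qed

lemma bivariate_polyfun_eq_0:
  fixes E :: "nat \<Rightarrow> nat \<Rightarrow> complex"
  assumes "\<And>s t. (\<Sum>k\<le>N. \<Sum>l\<le>N. s ^ k * t ^ l * E k l) = 0" "k \<le> N" "l \<le> N"
  shows "E k l = 0"
proof -
  have "\<forall>k\<le>N. (\<Sum>l\<le>N. E k l * t ^ l) = 0" for t
  proof -
    have "\<forall>s. (\<Sum>k\<le>N. (\<Sum>l\<le>N. E k l * t ^ l) * s ^ k) = 0"
      using assms(1) by (simp add: sum_distrib_left sum_distrib_right mult_ac)
    then show ?thesis by (subst (asm) polyfun_eq_0)
  qed
  then have "\<forall>t. (\<Sum>l\<le>N. E k l * t ^ l) = 0" using assms(2) by blast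
  then show ?thesis using assms(3) by (subst (asm) polyfun_eq_0) blast
qed

text \<open>Pair the powers \<open>(x + s y)^N\<close> and \<open>(x + t y)^N\<close>: by \<open>Omega_power_form\<close> the result
  is multiplied by \<open>(a d - b c)^N\<close> under the action, and the two pairings are polynomials in
  \<open>s, t\<close> whose coefficients are the two Gram matrices.\<close>
lemma Omega_pullback_coeff_eq:
  assumes "k \<le> N" "l \<le> N"
  shows "Omega_pullback_coeff N (a,b,c,d) k l = (a*d - b*c) ^ N * Omega_coeff N k l"
proof -
  define g where "g = (a,b,c,d)"
  define D where "D k l = Omega_pullback_coeff N g k l - (a*d - b*c) ^ N * Omega_coeff N k l" for k l
  have "of_nat (N choose k) * of_nat (N choose l) * D k l = 0"
  proof (rule bivariate_polyfun_eq_0[where E="\<lambda>k l. of_nat (N choose k) * of_nat (N choose l) * D k l"])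
    fix s t :: complex
    have power_form_1: "power_form N 1 z k = of_nat (N choose k) * z ^ k" if "k \<le> N" for z k
      using that by (simp add: power_form_def)
    have "(\<Sum>k\<le>N. \<Sum>l\<le>N. s ^ k * t ^ l * (of_nat (N choose k) * of_nat (N choose l) * D k l))
      = (\<Sum>k<Suc N. \<Sum>l<Suc N. power_form N 1 s k * power_form N 1 t l * Omega_pullback_coeff N g k l)
        - (a*d - b*c) ^ N
          * (\<Sum>k<Suc N. \<Sum>l<Suc N. power_form N 1 s k * power_form N 1 t l * Omega_coeff N k l)"
      unfolding lessThan_Suc_atMost
      by (simp del: sum.lessThan_Suc
          add: power_form_1 D_def sum_distrib_left sum_subtractf algebra_simps)
    also have "\<dots> = Omega (Suc N) (sym_act (Suc N) g (power_form N 1 s)) (sym_act (Suc N) g (power_form N 1 t))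
         - (a*d - b*c) ^ N * Omega (Suc N) (power_form N 1 s) (power_form N 1 t)"
      by (subst Omega_sym_act_eq_sum_pullback_coeff, subst Omega_eq_sum_Omega_coeff) (rule refl)
    also have "\<dots> = 0"
      by (simp add: g_def sym_act_power_form Omega_power_form power_mult_distrib[symmetric]
          algebra_simps)
    finally show "(\<Sum>k\<le>N. \<Sum>l\<le>N. s ^ k * t ^ l * (of_nat (N choose k) * of_nat (N choose l) * D k l)) = 0" .
  qed (use assms in auto)
  then show ?thesis using assms by (simp add: D_def g_def)
qed

lemma Omega_sym_act:
  "Omega (Suc N) (sym_act (Suc N) (a,b,c,d) u) (sym_act (Suc N) (a,b,c,d) w)
   = (a*d - b*c) ^ N * Omega (Suc N) u w"
proof -
  have "Omega (Suc N) (sym_act (Suc N) (a,b,c,d) u) (sym_act (Suc N) (a,b,c,d) w)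
      = (\<Sum>k<Suc N. \<Sum>l<Suc N. u k * w l * Omega_pullback_coeff N (a,b,c,d) k l)"
    by (rule Omega_sym_act_eq_sum_pullback_coeff)
  also have "\<dots> = (\<Sum>k<Suc N. \<Sum>l<Suc N. (a*d - b*c) ^ N * (u k * w l * Omega_coeff N k l))"
    by (intro sum.cong refl) (simp add: Omega_pullback_coeff_eq)
  also have "\<dots> = (a*d - b*c) ^ N * Omega (Suc N) u w"
    by (simp only: Omega_eq_sum_Omega_coeff sum_distrib_left)
  finally show ?thesis .
qed

lemma Omega_sym_act_SL2C:
  "g \<in> SL2C \<Longrightarrow> Omega (Suc N) (sym_act (Suc N) g u) (sym_act (Suc N) g w) = Omega (Suc N) u w"
  by (cases g) (simp add: SL2C_def Omega_sym_act)

section \<open>Orbits of the standard flag\<close>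

text \<open>\<open>std_flag N r\<close> consists of the forms divisible by \<open>x^(N-r+1)\<close>, so for
  \<open>g = (a,b,c,d)\<close> the subspace \<open>orbit_flag N g r\<close> consists of the forms divisible by
  \<open>(a x + b y)^(N-r+1)\<close> and depends only on the point \<open>[a : b]\<close> of \<open>CP^1\<close>;
  \<open>transverse g h\<close> says that the points of \<open>g\<close> and \<open>h\<close> differ.\<close>
definition std_flag :: "nat \<Rightarrow> nat \<Rightarrow> (nat \<Rightarrow> complex) set" where
  "std_flag N r = {u \<in> Cvec (Suc N). \<forall>j\<ge>r. u j = 0}"

definition orbit_flag ::
    "nat \<Rightarrow> complex \<times> complex \<times> complex \<times> complex \<Rightarrow> nat \<Rightarrow> (nat \<Rightarrow> complex) set" where
  "orbit_flag N g r = sym_act (Suc N) g ` std_flag N r"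

definition transverse :: "complex \<times> complex \<times> complex \<times> complex
    \<Rightarrow> complex \<times> complex \<times> complex \<times> complex \<Rightarrow> bool" where
  "transverse g h \<longleftrightarrow> (case g of (a,b,_,_) \<Rightarrow> case h of (a',b',_,_) \<Rightarrow> a*b' - a'*b \<noteq> 0)"

definition weyl :: "complex \<times> complex \<times> complex \<times> complex" where
  "weyl = (0, 1, -1, 0)"

lemma zero_in_std_flag: "0 \<in> std_flag N r"
  by (simp add: std_flag_def Cvec_def)

lemma std_flag_subset_Cvec: "std_flag N r \<subseteq> Cvec (Suc N)"
  by (auto simp: std_flag_def)

lemma std_flag_mono: "r \<le> r' \<Longrightarrow> std_flag N r \<subseteq> std_flag N r'"
  by (auto simp: std_flag_def)

lemma orbit_flag_subset_Cvec: "orbit_flag N g r \<subseteq> Cvec (Suc N)"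
  by (auto simp: orbit_flag_def sym_act_in_Cvec)

lemma zero_in_orbit_flag: "0 \<in> orbit_flag N g r"
  unfolding orbit_flag_def using zero_in_std_flag sym_act_zero by (metis image_eqI)

lemma orbit_flag_scale: "w \<in> orbit_flag N g r \<Longrightarrow> (\<lambda>i. z * w i) \<in> orbit_flag N g r"
proof -
  assume "w \<in> orbit_flag N g r"
  then obtain t where t: "t \<in> std_flag N r" "w = sym_act (Suc N) g t"
    by (auto simp: orbit_flag_def)
  have "(\<lambda>i. z * t i) \<in> std_flag N r" using t(1) by (auto simp: std_flag_def Cvec_def)
  then show ?thesis unfolding t(2) sym_act_scale[symmetric] orbit_flag_def by blast
qed

lemma sym_act_lower_in_std_flag:
  assumes "u \<in> std_flag N r"
  shows "sym_act (Suc N) (a,0,c,d) u \<in> std_flag N r"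
proof -
  have "sym_coef N (a,0,c,d) k j = 0" if "k < j" for k j
    unfolding sym_coef_def by (simp, rule sum.neutral) (use that in auto)
  then have "u k * sym_coef N (a,0,c,d) k j = 0" if "j \<ge> r" for j k
    using assms that by (cases "k < j") (auto simp: std_flag_def)
  then have "sym_act (Suc N) (a,0,c,d) u j = 0" if "j \<ge> r" for j
    using that by (auto simp del: sum.lessThan_Suc simp: sym_act_def intro!: sum.neutral)
  then show ?thesis by (simp add: std_flag_def sym_act_in_Cvec)
qed

lemma sym_act_lower_image_std_flag:
  assumes "q1 * q4 = 1"
  shows "sym_act (Suc N) (q1,0,q3,q4) ` std_flag N r = std_flag N r"
proof
  show "sym_act (Suc N) (q1,0,q3,q4) ` std_flag N r \<subseteq> std_flag N r"
    using sym_act_lower_in_std_flag by blast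
  show "std_flag N r \<subseteq> sym_act (Suc N) (q1,0,q3,q4) ` std_flag N r"
  proof
    fix s assume s: "s \<in> std_flag N r"
    have "s = sym_act (Suc N) (q1,0,q3,q4) (sym_act (Suc N) (q4,0,-q3,q1) s)"
      using sym_act_inverse[of q1 0 q3 q4 s N] assms s by (simp add: SL2C_def std_flag_def)
    then show "s \<in> sym_act (Suc N) (q1,0,q3,q4) ` std_flag N r"
      using sym_act_lower_in_std_flag[OF s] by blast
  qed
qed

lemma sym_act_weyl:
  "sym_act (Suc N) weyl t = (\<lambda>j. if j < Suc N then (-1) ^ (N - j) * t (N - j) else 0)"
proof (rule Cvec_eqI_binary_form[OF sym_act_in_Cvec])
  show "(\<lambda>j. if j < Suc N then (-1) ^ (N - j) * t (N - j) else 0) \<in> Cvec (Suc N)"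
    by (simp add: Cvec_def)
  fix y
  have "binary_form N (sym_act (Suc N) weyl t) 1 y = (\<Sum>k<Suc N. t k * y ^ (N - k) * (-1) ^ k)"
    by (simp only: weyl_def binary_form_sym_act) (simp add: binary_form_def)
  also have "\<dots> = (\<Sum>i<Suc N. t (N - i) * y ^ (N - (N - i)) * (-1) ^ (N - i))"
    by (rule sum.reindex_bij_witness[where i="\<lambda>i. N - i" and j="\<lambda>i. N - i"]) auto
  also have "\<dots> = binary_form N (\<lambda>j. if j < Suc N then (-1) ^ (N - j) * t (N - j) else 0) 1 y"
    unfolding binary_form_def by (intro sum.cong refl) auto
  finally show "binary_form N (sym_act (Suc N) weyl t) 1 y
      = binary_form N (\<lambda>j. if j < Suc N then (-1) ^ (N - j) * t (N - j) else 0) 1 y" .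
qed

lemma Omega_weyl:
  "Omega (Suc N) s (sym_act (Suc N) weyl t) = (\<Sum>k<Suc N. s k * t k / of_nat (N choose k))"
  unfolding Omega_def sym_act_weyl
proof (intro sum.cong refl)
  fix k assume "k \<in> {..<Suc N}"
  then have k: "N - (N - k) = k" "N - k < Suc N" by auto
  have "(-1::complex) ^ k * (-1) ^ k = 1" by (simp add: power_add[symmetric])
  with k show "(-1) ^ k / of_nat (Suc N - 1 choose k) * s k
      * (if Suc N - 1 - k < Suc N then (-1) ^ (N - (Suc N - 1 - k)) * t (N - (Suc N - 1 - k)) else 0)
      = s k * t k / of_nat (N choose k)"
    by (simp add: field_simps)
qed

lemma Omega_std_flag_isotropic:
  assumes "2 * r \<le> Suc N" "s \<in> std_flag N r" "s' \<in> std_flag N r"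
  shows "Omega (Suc N) s s' = 0"
  unfolding Omega_def
proof (rule sum.neutral, rule ballI)
  fix k assume "k \<in> {..<Suc N}"
  show "(-1) ^ k / of_nat (Suc N - 1 choose k) * s k * s' (Suc N - 1 - k) = 0"
  proof (cases "k < r")
    case True
    then have "Suc N - 1 - k \<ge> r" using assms(1) by auto
    then show ?thesis using assms(3) by (simp add: std_flag_def)
  next
    case False
    then show ?thesis using assms(2) by (simp add: std_flag_def)
  qed
qed

lemma Omega_orbit_flag_isotropic:
  "g \<in> SL2C \<Longrightarrow> 2 * r \<le> Suc N \<Longrightarrow> u \<in> orbit_flag N g r \<Longrightarrow> w \<in> orbit_flag N g r
   \<Longrightarrow> Omega (Suc N) u w = 0"
  by (auto simp: orbit_flag_def Omega_sym_act_SL2C Omega_std_flag_isotropic)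

text \<open>Bruhat decomposition: a transverse pair \<open>g, h\<close> is moved by a single \<open>Z \<in> SL(2,C)\<close>
  to the pair of standard flags \<open>1, weyl\<close>, since \<open>g = Q Z\<close> and \<open>h = Q' weyl Z\<close> with \<open>Q, Q'\<close>
  lower triangular.\<close>
lemma transverse_normal_form:
  assumes "g \<in> SL2C" "h \<in> SL2C" "transverse g h"
  obtains Z where "Z \<in> SL2C"
    "orbit_flag N g r = sym_act (Suc N) Z ` std_flag N r"
    "orbit_flag N h r = sym_act (Suc N) Z ` sym_act (Suc N) weyl ` std_flag N r"
    "\<And>v. v \<in> Cvec (Suc N) \<Longrightarrow> \<exists>v'\<in>Cvec (Suc N). v = sym_act (Suc N) Z v'"
proof -
  obtain a b c d a' b' c' d' where gh: "g = (a,b,c,d)" "h = (a',b',c',d')"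
    by (cases g, cases h) auto
  have det: "a*d - b*c = 1" "a'*d' - b'*c' = 1" and \<delta>: "a*b' - a'*b \<noteq> 0"
    using assms by (auto simp: gh SL2C_def transverse_def)
  define \<iota> where "\<iota> = 1 / (a*b' - a'*b)"
  have \<iota>: "(a*b' - a'*b) * \<iota> = 1" using \<delta> by (simp add: \<iota>_def)
  define Z where "Z = (a, b, a'*\<iota>, b'*\<iota>)"
  define Q where "Q = (1::complex, 0::complex, (c*b' - d*a')*\<iota>, 1::complex)"
  define Q' where "Q' = (a*b' - a'*b, 0::complex, a*d' - b*c', \<iota>)"
  have Z: "Z \<in> SL2C" using \<iota> by (simp add: Z_def SL2C_def algebra_simps)
  have "mat_mult Q Z = g" "mat_mult (mat_mult Q' weyl) Z = h"
    using det \<iota> by (simp_all add: gh Z_def Q_def Q'_def mat_mult_def weyl_def) algebra+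
  then have g_eq: "sym_act (Suc N) g u = sym_act (Suc N) Z (sym_act (Suc N) Q u)"
    and h_eq: "sym_act (Suc N) h u = sym_act (Suc N) Z (sym_act (Suc N) weyl (sym_act (Suc N) Q' u))"
    for u by (simp_all add: sym_act_sym_act)
  show ?thesis
  proof
    have "orbit_flag N g r = sym_act (Suc N) Z ` sym_act (Suc N) Q ` std_flag N r"
      by (simp add: orbit_flag_def g_eq image_image)
    then show "orbit_flag N g r = sym_act (Suc N) Z ` std_flag N r"
      by (simp add: Q_def sym_act_lower_image_std_flag)
    have "orbit_flag N h r
        = sym_act (Suc N) Z ` sym_act (Suc N) weyl ` sym_act (Suc N) Q' ` std_flag N r"
      by (simp add: orbit_flag_def h_eq image_image)
    then show "orbit_flag N h r = sym_act (Suc N) Z ` sym_act (Suc N) weyl ` std_flag N r"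
      unfolding Q'_def sym_act_lower_image_std_flag[OF \<iota>] .
    fix v assume "v \<in> Cvec (Suc N)"
    then show "\<exists>v'\<in>Cvec (Suc N). v = sym_act (Suc N) Z v'"
      using Z sym_act_inverse[of a b "a'*\<iota>" "b'*\<iota>"] sym_act_in_Cvec by (metis Z_def)
  qed (rule Z)
qed

lemma orbit_flag_perp_eq_0:
  assumes "g \<in> SL2C" "h \<in> SL2C" "transverse g h" "r \<le> Suc N"
    and u: "u \<in> orbit_flag N g r" and perp: "\<forall>w\<in>orbit_flag N h r. Omega (Suc N) u w = 0"
  shows "u = 0"
proof -
  obtain Z where Z: "Z \<in> SL2C"
    "orbit_flag N g r = sym_act (Suc N) Z ` std_flag N r"
    "orbit_flag N h r = sym_act (Suc N) Z ` sym_act (Suc N) weyl ` std_flag N r"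
    using transverse_normal_form[OF assms(1-3)] by metis
  obtain s where s: "s \<in> std_flag N r" and u_eq: "u = sym_act (Suc N) Z s"
    using u Z(2) by auto
  have "s j = 0" if j: "j < r" for j
  proof -
    define e where "e = (\<lambda>i. if i = j then (1::complex) else 0)"
    have "e \<in> std_flag N r" using j assms(4) by (auto simp: e_def std_flag_def Cvec_def)
    then have "sym_act (Suc N) Z (sym_act (Suc N) weyl e) \<in> orbit_flag N h r"
      using Z(3) by blast
    then have "Omega (Suc N) s (sym_act (Suc N) weyl e) = 0"
      using perp by (metis u_eq Omega_sym_act_SL2C[OF Z(1)])
    moreover have "(\<Sum>k<Suc N. s k * e k / of_nat (N choose k)) = s j / of_nat (N choose j)"
      using j assms(4) by (simp del: sum.lessThan_Suc add: e_def if_distrib[of "\<lambda>x. _ * x / _"]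
          sum.delta' cong: if_cong)
    ultimately show ?thesis using j assms(4) by (simp add: Omega_weyl)
  qed
  then have "s = 0" using s by (auto simp: std_flag_def fun_eq_iff) (meson not_le)
  then show ?thesis by (simp add: u_eq sym_act_zero)
qed

lemma orbit_flag_perp_complement:
  assumes "g \<in> SL2C" "h \<in> SL2C" "transverse g h" "v \<in> Cvec (Suc N)"
  shows "\<exists>u1\<in>orbit_flag N g r. \<exists>u2\<in>Cvec (Suc N). v = u1 + u2
           \<and> (\<forall>w\<in>orbit_flag N h r. Omega (Suc N) u2 w = 0)"
proof -
  obtain Z where Z: "Z \<in> SL2C"
    "orbit_flag N g r = sym_act (Suc N) Z ` std_flag N r"
    "orbit_flag N h r = sym_act (Suc N) Z ` sym_act (Suc N) weyl ` std_flag N r"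
    "\<exists>v'\<in>Cvec (Suc N). v = sym_act (Suc N) Z v'"
    using transverse_normal_form[OF assms(1-3)] assms(4) by metis
  then obtain v' where v': "v' \<in> Cvec (Suc N)" "v = sym_act (Suc N) Z v'" by blast
  define s1 where "s1 = (\<lambda>k. if k < r then v' k else 0)"
  define s2 where "s2 = (\<lambda>k. if k < r then 0 else v' k)"
  have "s1 \<in> std_flag N r" using v'(1) by (auto simp: s1_def std_flag_def Cvec_def)
  then have u1: "sym_act (Suc N) Z s1 \<in> orbit_flag N g r" using Z(2) by blast
  have "Omega (Suc N) (sym_act (Suc N) Z s2) w = 0" if "w \<in> orbit_flag N h r" for w
  proof -
    obtain t where t: "t \<in> std_flag N r" "w = sym_act (Suc N) Z (sym_act (Suc N) weyl t)"
      using \<open>w \<in> orbit_flag N h r\<close> Z(3) by auto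
    have "Omega (Suc N) (sym_act (Suc N) Z s2) w = (\<Sum>k<Suc N. s2 k * t k / of_nat (N choose k))"
      by (simp add: t(2) Omega_sym_act_SL2C[OF Z(1)] Omega_weyl)
    also have "\<dots> = 0"
      using t(1) by (intro sum.neutral) (auto simp: s2_def std_flag_def)
    finally show ?thesis .
  qed
  moreover have "v' = s1 + s2" by (simp add: s1_def s2_def fun_eq_iff)
  then have "v = sym_act (Suc N) Z s1 + sym_act (Suc N) Z s2"
    by (simp add: v'(2) sym_act_add)
  ultimately show ?thesis using u1 sym_act_in_Cvec by blast
qed

lemma orbit_flag_eq_if_not_transverse:
  assumes "g \<in> SL2C" "h \<in> SL2C" "\<not> transverse g h"
  shows "orbit_flag N h r = orbit_flag N g r"
proof -
  obtain a b c d a' b' c' d' where gh: "g = (a,b,c,d)" "h = (a',b',c',d')"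
    by (cases g, cases h) auto
  have det: "a*d - b*c = 1" "a'*d' - b'*c' = 1" and \<delta>: "a*b' - a'*b = 0"
    using assms by (auto simp: gh SL2C_def transverse_def)
  define Q where "Q = (a'*d - b'*c, 0::complex, c'*d - d'*c, d'*a - c'*b)"
  have "mat_mult Q g = h" "(a'*d - b'*c) * (d'*a - c'*b) = 1"
    using det \<delta> unfolding Q_def gh by (simp_all add: mat_mult_def) algebra+
  then have "orbit_flag N h r = sym_act (Suc N) g ` sym_act (Suc N) Q ` std_flag N r"
    by (simp add: orbit_flag_def image_image sym_act_sym_act)
  also have "\<dots> = orbit_flag N g r"
    using \<open>(a'*d - b'*c) * (d'*a - c'*b) = 1\<close>
    by (simp add: Q_def sym_act_lower_image_std_flag orbit_flag_def)
  finally show ?thesis .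
qed

lemma orbit_flag_1_eq_power_form_multiple:
  assumes "w \<in> orbit_flag N (a,b,c,d) 1"
  shows "\<exists>z. w = (\<lambda>i. z * power_form N a b i)"
proof -
  obtain t where t: "t \<in> std_flag N 1" "w = sym_act (Suc N) (a,b,c,d) t"
    using assms by (auto simp: orbit_flag_def)
  have t_eq: "t = (\<lambda>k. t 0 * power_form N 1 0 k)"
  proof
    fix k
    show "t k = t 0 * power_form N 1 0 k"
      using t(1) by (cases "k = 0") (auto simp: std_flag_def power_form_def)
  qed
  have "w = sym_act (Suc N) (a,b,c,d) (\<lambda>k. t 0 * power_form N 1 0 k)"
    unfolding t(2) using t_eq by (rule arg_cong)
  then show ?thesis by (auto simp: sym_act_scale sym_act_power_form)
qed

lemma orbit_flag_1_perp:
  assumes "Omega (Suc N) u (power_form N a b) = 0"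
  shows "\<forall>w\<in>orbit_flag N (a,b,c,d) 1. Omega (Suc N) u w = 0"
proof
  fix w assume "w \<in> orbit_flag N (a,b,c,d) 1"
  then obtain z where "w = (\<lambda>i. z * power_form N a b i)"
    using orbit_flag_1_eq_power_form_multiple by blast
  then show "Omega (Suc N) u w = 0" using assms by (simp add: Omega_scale_right)
qed

text \<open>Pairing \<open>u\<close> with \<open>(z x + y)^N\<close> is a polynomial in \<open>z\<close> of degree \<open>N\<close> unless
  \<open>u N = 0\<close>; it has a root by the fundamental theorem of algebra.\<close>
lemma exists_orbit_flag_perp:
  assumes "u \<in> Cvec (Suc N)" "N \<ge> 1"
  shows "\<exists>g\<in>SL2C. \<forall>w\<in>orbit_flag N g 1. Omega (Suc N) u w = 0"
proof (cases "u N = 0")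
  case True
  have "Omega (Suc N) u (power_form N 1 0) = 0"
    unfolding Omega_power_form_right
    by (rule sum.neutral) (use True in \<open>auto simp: less_Suc_eq\<close>)
  then have "\<forall>w\<in>orbit_flag N (1,0,0,1) 1. Omega (Suc N) u w = 0" by (rule orbit_flag_1_perp)
  moreover have "(1,0,0,1) \<in> SL2C" by (simp add: SL2C_def)
  ultimately show ?thesis by blast
next
  case False
  define p where "p = (\<Sum>k\<le>N. monom ((-1) ^ k * u k) k)"
  have "coeff p N \<noteq> 0"
    using False by (simp add: p_def coeff_sum coeff_monom sum.delta)
  then have "degree p \<ge> N" by (rule le_degree)
  then have "\<not> constant (poly p)" using assms(2) by (simp add: constant_degree)
  then obtain z where z: "poly p z = 0" using fundamental_theorem_of_algebra by blast
  have "Omega (Suc N) u (power_form N z 1) = poly p z"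
    unfolding Omega_power_form_right p_def
    by (simp add: poly_sum poly_monom lessThan_Suc_atMost mult_ac)
  then have "\<forall>w\<in>orbit_flag N (z,1,-1,0) 1. Omega (Suc N) u w = 0"
    using z by (intro orbit_flag_1_perp) simp
  moreover have "(z,1,-1,0) \<in> SL2C" by (simp add: SL2C_def)
  ultimately show ?thesis by blast
qed


section \<open>Real points of the flags\<close>

lemma Omega_orbit_flag_eq_0_if_Re_eq_0:
  assumes "c \<noteq> 0" "\<forall>w\<in>orbit_flag N h r. Re (c * Omega (Suc N) u w) = 0"
  shows "\<forall>w\<in>orbit_flag N h r. Omega (Suc N) u w = 0"
proof
  fix w assume w: "w \<in> orbit_flag N h r"
  define z where "z = c * Omega (Suc N) u w"
  have "c * Omega (Suc N) u (\<lambda>i. cnj z * w i) = cnj z * z"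
    unfolding Omega_scale_right z_def by (simp add: mult_ac)
  then have "Re (cnj z * z) = 0" using assms(2) orbit_flag_scale[OF w] by metis
  then have "z = 0" by (simp add: complex_eq_iff power2_eq_square[symmetric] sum_power2_eq_zero_iff)
  then show "Omega (Suc N) u w = 0" using assms(1) by (simp add: z_def)
qed

lemma sum_fun_apply: "(\<Sum>x\<in>A. f x) j = (\<Sum>x\<in>A. f x j)"
  by (induction A rule: infinite_finite_induct) auto

lemma Rvec_add: "x \<in> Rvec N \<Longrightarrow> y \<in> Rvec N \<Longrightarrow> x + y \<in> Rvec N"
  by (simp add: Rvec_def)

lemma Rvec_diff: "x \<in> Rvec N \<Longrightarrow> y \<in> Rvec N \<Longrightarrow> x - y \<in> Rvec N"
  by (simp add: Rvec_def)

lemma zero_in_Rvec: "0 \<in> Rvec N"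
  by (simp add: Rvec_def)

lemma zero_in_Cvec: "0 \<in> Cvec m"
  by (simp add: Cvec_def)

lemma zero_in_omega_perp: "0 \<in> omega_perp n W"
  by (simp add: omega_perp_def zero_in_Rvec omega_def)

definition cscale :: "real \<Rightarrow> (nat \<Rightarrow> complex) \<Rightarrow> (nat \<Rightarrow> complex)" where
  "cscale r u = (\<lambda>i. of_real r * u i)"

interpretation cv: vector_space cscale
  by unfold_locales (auto simp: cscale_def fun_eq_iff algebra_simps)

interpretation cr: vector_space_pair cscale rscale ..

definition cunit :: "nat \<Rightarrow> nat \<Rightarrow> complex" where
  "cunit k = (\<lambda>i. if i = k then 1 else 0)"

definition iunit :: "nat \<Rightarrow> nat \<Rightarrow> complex" where
  "iunit k = (\<lambda>i. if i = k then \<i> else 0)"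

definition std_flag_basis :: "nat \<Rightarrow> (nat \<Rightarrow> complex) set" where
  "std_flag_basis r = cunit ` {..<r} \<union> iunit ` {..<r}"

lemma inj_cunit: "inj_on cunit A"
  unfolding inj_on_def cunit_def fun_eq_iff by (metis zero_neq_one)

lemma inj_iunit: "inj_on iunit A"
  unfolding inj_on_def iunit_def fun_eq_iff by (metis complex_i_not_zero)

lemma cunit_iunit_disjoint: "cunit ` A \<inter> iunit ` B = {}"
  unfolding cunit_def iunit_def fun_eq_iff by (auto, metis complex_i_not_one)

lemma card_std_flag_basis: "card (std_flag_basis r) = 2 * r"
  unfolding std_flag_basis_def
  by (subst card_Un_disjoint)
    (auto simp: cunit_iunit_disjoint card_image[OF inj_cunit] card_image[OF inj_iunit])

lemma subspace_std_flag: "cv.subspace (std_flag N r)"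
  by (auto simp: cv.subspace_def std_flag_def Cvec_def cscale_def)

lemma span_std_flag_basis:
  assumes "r \<le> Suc N"
  shows "cv.span (std_flag_basis r) = std_flag N r"
proof
  have "std_flag_basis r \<subseteq> std_flag N r"
    using assms by (auto simp: std_flag_basis_def std_flag_def Cvec_def cunit_def iunit_def)
  then show "cv.span (std_flag_basis r) \<subseteq> std_flag N r"
    by (rule cv.span_minimal[OF _ subspace_std_flag])
  show "std_flag N r \<subseteq> cv.span (std_flag_basis r)"
  proof
    fix s assume s: "s \<in> std_flag N r"
    have "s = (\<Sum>k<r. cscale (Re (s k)) (cunit k) + cscale (Im (s k)) (iunit k))"
    proof
      fix j
      have "(\<Sum>k<r. cscale (Re (s k)) (cunit k) + cscale (Im (s k)) (iunit k)) j
          = (\<Sum>k<r. if k = j then s j else 0)"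
        unfolding sum_fun_apply
        by (intro sum.cong refl) (auto simp: cscale_def cunit_def iunit_def complex_eq_iff)
      also have "\<dots> = s j" using s by (auto simp: std_flag_def)
      finally show "s j = (\<Sum>k<r. cscale (Re (s k)) (cunit k) + cscale (Im (s k)) (iunit k)) j"
        by simp
    qed
    also have "\<dots> \<in> cv.span (std_flag_basis r)"
      by (intro cv.span_sum cv.span_add cv.span_scale cv.span_base)
        (auto simp: std_flag_basis_def)
    finally show "s \<in> cv.span (std_flag_basis r)" .
  qed
qed

lemma independent_std_flag_basis: "cv.independent (std_flag_basis r)"
proof
  assume "cv.dependent (std_flag_basis r)"
  then obtain u where u: "\<exists>v\<in>std_flag_basis r. u v \<noteq> 0"
    "(\<Sum>v\<in>std_flag_basis r. cscale (u v) v) = 0"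
    using cv.dependent_finite[of "std_flag_basis r"] by (auto simp: std_flag_basis_def)
  have "u (cunit k) = 0 \<and> u (iunit k) = 0" if k: "k < r" for k
  proof -
    have "0 = (\<Sum>v\<in>std_flag_basis r. cscale (u v) v) k" using u(2) by simp
    also have "\<dots> = (\<Sum>v\<in>cunit ` {..<r}. cscale (u v) v k) + (\<Sum>v\<in>iunit ` {..<r}. cscale (u v) v k)"
      unfolding sum_fun_apply std_flag_basis_def
      by (rule sum.union_disjoint) (auto simp: cunit_iunit_disjoint)
    also have "\<dots> = (\<Sum>i<r. cscale (u (cunit i)) (cunit i) k) + (\<Sum>i<r. cscale (u (iunit i)) (iunit i) k)"
      by (simp add: sum.reindex[OF inj_cunit] sum.reindex[OF inj_iunit])
    also have "\<dots> = of_real (u (cunit k)) + \<i> * of_real (u (iunit k))"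
      using k by (simp add: cscale_def cunit_def iunit_def if_distrib mult_ac cong: if_cong)
    finally show ?thesis by (simp add: complex_eq_iff)
  qed
  with u(1) show False by (auto simp: std_flag_basis_def)
qed

text \<open>\<open>T\<close> identifies \<open>C^(N+1)\<close> with \<open>R^(2N+2)\<close>, which \<open>E\<close> embeds into \<open>R^(2n)\<close>;
  \<open>P\<close> is a left inverse of \<open>E\<close> and adjoint to it for \<open>omega\<close>. For \<open>n\<close> even both are the
  identity, for \<open>n\<close> odd they are the block inclusion and projection.\<close>
locale symplectic_model =
  fixes n N :: nat and c :: complex and T :: "(nat \<Rightarrow> complex) \<Rightarrow> (nat \<Rightarrow> real)"
    and E P :: "(nat \<Rightarrow> real) \<Rightarrow> (nat \<Rightarrow> real)"
  assumes two_le_n: "2 \<le> n" and rank: "Suc N = 2 * (n div 2)"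
    and identification: "symplectic_identification (Suc N) c T"
    and E_add: "E (x + y) = E x + E y"
    and E_scale: "E (rscale r x) = rscale r (E x)"
    and P_add: "P (x + y) = P x + P y"
    and E_in_Rvec: "x \<in> Rvec (2 * Suc N) \<Longrightarrow> E x \<in> Rvec (2 * n)"
    and P_in_Rvec: "x \<in> Rvec (2 * n) \<Longrightarrow> P x \<in> Rvec (2 * Suc N)"
    and P_E: "x \<in> Rvec (2 * Suc N) \<Longrightarrow> P (E x) = x"
    and omega_E: "x \<in> Rvec (2 * n) \<Longrightarrow> y \<in> Rvec (2 * Suc N) \<Longrightarrow> omega n x (E y) = omega (Suc N) (P x) y"
begin

definition flag_space :: "complex \<times> complex \<times> complex \<times> complex \<Rightarrow> nat \<Rightarrow> (nat \<Rightarrow> real) set" where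
  "flag_space g r = E ` T ` orbit_flag N g r"

definition flag :: "complex \<times> complex \<times> complex \<times> complex \<Rightarrow> nat \<Rightarrow> (nat \<Rightarrow> real) set" where
  "flag g = (\<lambda>i. if i \<in> Theta_even n then flag_space g (i div 2) else {})"

lemma one_le_N: "1 \<le> N"
  using two_le_n rank by presburger

lemma c_nonzero: "c \<noteq> 0"
  using identification by (simp add: symplectic_identification_def)

lemma bij_T: "bij_betw T (Cvec (Suc N)) (Rvec (2 * Suc N))"
  using identification by (simp add: symplectic_identification_def)

lemma T_add: "u \<in> Cvec (Suc N) \<Longrightarrow> w \<in> Cvec (Suc N) \<Longrightarrow> T (u + w) = T u + T w"
  using identification by (simp add: symplectic_identification_def)

lemma T_scale: "u \<in> Cvec (Suc N) \<Longrightarrow> T (\<lambda>i. of_real r * u i) = rscale r (T u)"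
  using identification by (simp add: symplectic_identification_def)

lemma omega_T: "u \<in> Cvec (Suc N) \<Longrightarrow> w \<in> Cvec (Suc N)
    \<Longrightarrow> omega (Suc N) (T u) (T w) = Re (c * Omega (Suc N) u w)"
  using identification by (simp add: symplectic_identification_def)

lemma T_in_Rvec: "u \<in> Cvec (Suc N) \<Longrightarrow> T u \<in> Rvec (2 * Suc N)"
  using bij_T by (auto simp: bij_betw_def)

lemma T_surj: "y \<in> Rvec (2 * Suc N) \<Longrightarrow> \<exists>u\<in>Cvec (Suc N). T u = y"
  using bij_T unfolding bij_betw_def by (metis imageE)

lemma T_zero: "T 0 = 0"
  using T_add[OF zero_in_Cvec zero_in_Cvec] by simp

lemma E_zero: "E 0 = 0"
  using E_add[of 0 0] by simp

lemma P_diff: "P (x - y) = P x - P y"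
  using P_add[of "x - y" y] by (simp add: algebra_simps)

lemma flag_space_subset_Rvec: "flag_space g r \<subseteq> Rvec (2 * n)"
  using orbit_flag_subset_Cvec[of N g r] by (auto simp: flag_space_def intro!: E_in_Rvec T_in_Rvec)

lemma zero_in_flag_space: "0 \<in> flag_space g r"
  unfolding flag_space_def using zero_in_orbit_flag T_zero E_zero by (metis image_eqI)

lemma flag_space_mono: "r \<le> r' \<Longrightarrow> flag_space g r \<subseteq> flag_space g r'"
  unfolding flag_space_def orbit_flag_def using std_flag_mono by blast

lemma mem_omega_perp_flag_space:
  assumes "x \<in> Rvec (2 * n)"
  shows "x \<in> omega_perp n (flag_space h r) \<longleftrightarrow> (\<forall>w\<in>orbit_flag N h r. omega (Suc N) (P x) (T w) = 0)"
proof -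
  have "omega n x (E (T w)) = omega (Suc N) (P x) (T w)" if "w \<in> orbit_flag N h r" for w
    using that orbit_flag_subset_Cvec by (intro omega_E[OF assms] T_in_Rvec) blast
  then show ?thesis using assms by (auto simp: omega_perp_def flag_space_def)
qed

lemma flag_space_inter_omega_perp:
  assumes "g \<in> SL2C" "h \<in> SL2C" "transverse g h" "r \<le> Suc N"
  shows "flag_space g r \<inter> omega_perp n (flag_space h r) = {0}"
proof -
  have "x = 0" if x: "x \<in> flag_space g r" "x \<in> omega_perp n (flag_space h r)" for x
  proof -
    obtain u where u: "u \<in> orbit_flag N g r" "x = E (T u)" using x(1) by (auto simp: flag_space_def)
    have u_Cvec: "u \<in> Cvec (Suc N)" using u(1) orbit_flag_subset_Cvec by blast
    have x_Rvec: "x \<in> Rvec (2 * n)" using x(1) flag_space_subset_Rvec by blast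
    have "P x = T u" using P_E[OF T_in_Rvec[OF u_Cvec]] by (simp add: u(2))
    then have "\<forall>w\<in>orbit_flag N h r. omega (Suc N) (T u) (T w) = 0"
      using x(2) mem_omega_perp_flag_space[OF x_Rvec] by simp
    then have "\<forall>w\<in>orbit_flag N h r. Re (c * Omega (Suc N) u w) = 0"
      using orbit_flag_subset_Cvec[of N h r] omega_T[OF u_Cvec] by (metis subsetD)
    then have "\<forall>w\<in>orbit_flag N h r. Omega (Suc N) u w = 0"
      by (rule Omega_orbit_flag_eq_0_if_Re_eq_0[OF c_nonzero])
    then have "u = 0" using orbit_flag_perp_eq_0[OF assms u(1)] by blast
    then show ?thesis by (simp add: u(2) T_zero E_zero)
  qed
  then show ?thesis using zero_in_flag_space zero_in_omega_perp by blast
qed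

lemma flag_space_plus_omega_perp:
  assumes "g \<in> SL2C" "h \<in> SL2C" "transverse g h"
  shows "{v + w | v w. v \<in> flag_space g r \<and> w \<in> omega_perp n (flag_space h r)} = Rvec (2 * n)"
proof
  show "{v + w | v w. v \<in> flag_space g r \<and> w \<in> omega_perp n (flag_space h r)} \<subseteq> Rvec (2 * n)"
    using flag_space_subset_Rvec[of g r] by (auto simp: omega_perp_def intro!: Rvec_add)
  show "Rvec (2 * n) \<subseteq> {v + w | v w. v \<in> flag_space g r \<and> w \<in> omega_perp n (flag_space h r)}"
  proof
    fix x assume x: "x \<in> Rvec (2 * n)"
    obtain v where v: "v \<in> Cvec (Suc N)" "T v = P x" using T_surj P_in_Rvec[OF x] by blast
    obtain u1 u2 where u: "u1 \<in> orbit_flag N g r" "u2 \<in> Cvec (Suc N)" "v = u1 + u2"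
      "\<forall>w\<in>orbit_flag N h r. Omega (Suc N) u2 w = 0"
      using orbit_flag_perp_complement[OF assms v(1)] by blast
    have u1_Cvec: "u1 \<in> Cvec (Suc N)" using u(1) orbit_flag_subset_Cvec by blast
    \<comment> \<open>the part of \<open>x\<close> outside the image of \<open>E\<close> goes into the \<open>omega\<close>-complement\<close>
    define w where "w = E (T u2) + (x - E (P x))"
    have "E (T u1) + E (T u2) = E (P x)"
      using v u u1_Cvec by (simp add: T_add E_add[symmetric])
    then have x_eq: "x = E (T u1) + w" by (simp add: w_def algebra_simps)
    have w_Rvec: "w \<in> Rvec (2 * n)"
      unfolding w_def by (intro Rvec_add Rvec_diff E_in_Rvec T_in_Rvec P_in_Rvec u(2) x)
    have "P w = T u2"
      using P_E[OF T_in_Rvec[OF u(2)]] P_E[OF P_in_Rvec[OF x]] by (simp add: w_def P_add P_diff)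
    then have "w \<in> omega_perp n (flag_space h r)"
      using u(4) orbit_flag_subset_Cvec[of N h r]
      by (auto simp: mem_omega_perp_flag_space[OF w_Rvec] omega_T[OF u(2)])
    moreover have "E (T u1) \<in> flag_space g r" using u(1) by (simp add: flag_space_def)
    ultimately show "x \<in> {v + w | v w. v \<in> flag_space g r \<and> w \<in> omega_perp n (flag_space h r)}"
      using x_eq by blast
  qed
qed

lemma flag_space_antipodal:
  "g \<in> SL2C \<Longrightarrow> h \<in> SL2C \<Longrightarrow> transverse g h \<Longrightarrow> r \<le> Suc N
   \<Longrightarrow> direct_sum_full n (flag_space g r) (omega_perp n (flag_space h r))"
  by (simp add: direct_sum_full_def flag_space_inter_omega_perp flag_space_plus_omega_perp)

lemma flag_space_eq_if_not_transverse:
  "g \<in> SL2C \<Longrightarrow> h \<in> SL2C \<Longrightarrow> \<not> transverse g h \<Longrightarrow> flag_space h r = flag_space g r"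
  by (simp add: flag_space_def orbit_flag_eq_if_not_transverse)

lemma exists_flag_space_not_antipodal:
  assumes "V \<subseteq> Rvec (2 * n)" "v \<in> V" "v \<noteq> 0"
  shows "\<exists>g\<in>SL2C. \<not> direct_sum_full n V (omega_perp n (flag_space g 1))"
proof -
  have v: "v \<in> Rvec (2 * n)" using assms by auto
  obtain u where u: "u \<in> Cvec (Suc N)" "T u = P v" using T_surj P_in_Rvec[OF v] by blast
  obtain g where g: "g \<in> SL2C" "\<forall>w\<in>orbit_flag N g 1. Omega (Suc N) u w = 0"
    using exists_orbit_flag_perp[OF u(1) one_le_N] by blast
  have "v \<in> omega_perp n (flag_space g 1)"
    using g(2) orbit_flag_subset_Cvec[of N g 1]
    by (auto simp: mem_omega_perp_flag_space[OF v] u(2)[symmetric] omega_T[OF u(1)])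
  then have "V \<inter> omega_perp n (flag_space g 1) \<noteq> {0}" using assms by auto
  then show ?thesis using g(1) unfolding direct_sum_full_def by blast
qed

definition flag_map :: "complex \<times> complex \<times> complex \<times> complex \<Rightarrow> (nat \<Rightarrow> complex) \<Rightarrow> (nat \<Rightarrow> real)" where
  "flag_map g u = E (T (sym_act (Suc N) g u))"

lemma linear_flag_map: "Vector_Spaces.linear cscale rscale (flag_map g)"
proof -
  have "flag_map g (u + w) = flag_map g u + flag_map g w" for u w
    by (simp add: flag_map_def sym_act_add T_add sym_act_in_Cvec E_add)
  moreover have "flag_map g (cscale r u) = rscale r (flag_map g u)" for r u
    by (simp add: flag_map_def cscale_def sym_act_scale T_scale sym_act_in_Cvec E_scale)
  ultimately show ?thesis
    unfolding Vector_Spaces.linear_iff using cv.vector_space_axioms rv.vector_space_axioms by blast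
qed

lemma inj_on_flag_map:
  assumes "g \<in> SL2C"
  shows "inj_on (flag_map g) (Cvec (Suc N))"
proof
  fix u w assume uw: "u \<in> Cvec (Suc N)" "w \<in> Cvec (Suc N)" "flag_map g u = flag_map g w"
  obtain a b c d where g: "g = (a,b,c,d)" by (cases g) auto
  have "T (sym_act (Suc N) g u) = T (sym_act (Suc N) g w)"
    using uw(3) P_E[OF T_in_Rvec[OF sym_act_in_Cvec]] unfolding flag_map_def by metis
  then have "sym_act (Suc N) g u = sym_act (Suc N) g w"
    using bij_T sym_act_in_Cvec by (metis bij_betw_def inj_onD)
  moreover have "(d,-b,-c,a) \<in> SL2C" using assms by (simp add: g SL2C_def algebra_simps)
  ultimately show "u = w"
    using sym_act_inverse[of d "-b" "-c" a] uw(1,2) by (metis g minus_minus)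
qed

lemma subspace_flag_space: "rv.subspace (flag_space g r)"
proof -
  have "flag_space g r = flag_map g ` std_flag N r"
    by (simp add: flag_space_def orbit_flag_def flag_map_def image_image)
  then show ?thesis using cr.linear_subspace_image[OF linear_flag_map subspace_std_flag] by simp
qed

lemma dim_flag_space:
  assumes "g \<in> SL2C" "r \<le> Suc N"
  shows "rv.dim (flag_space g r) = 2 * r"
proof -
  let ?f = "flag_map g" and ?B = "std_flag_basis r"
  have span: "cv.span ?B = std_flag N r" using span_std_flag_basis[OF assms(2)] .
  have inj: "inj_on ?f (cv.span ?B)"
    using inj_on_flag_map[OF assms(1)] std_flag_subset_Cvec unfolding span by (rule inj_on_subset)
  have "flag_space g r = ?f ` std_flag N r"
    by (simp add: flag_space_def orbit_flag_def flag_map_def image_image)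
  also have "\<dots> = rv.span (?f ` ?B)"
    unfolding span[symmetric] by (rule cr.linear_span_image[OF linear_flag_map, symmetric])
  finally have "flag_space g r = rv.span (?f ` ?B)" .
  moreover have "rv.independent (?f ` ?B)"
    using cr.linear_dependent_inj_imageD[OF linear_flag_map _ inj] independent_std_flag_basis by blast
  ultimately have "rv.dim (flag_space g r) = card (?f ` ?B)"
    using rv.dim_span_eq_card_independent by simp
  also have "\<dots> = card ?B"
    using inj cv.span_superset by (intro card_image) (rule inj_on_subset)
  finally show ?thesis by (simp add: card_std_flag_basis)
qed

lemma flag_space_isotropic:
  assumes "g \<in> SL2C" "2 * r \<le> Suc N"
  shows "isotropic_subspace n (2 * r) (flag_space g r)"
proof -
  have "omega n x y = 0" if xy: "x \<in> flag_space g r" "y \<in> flag_space g r" for x y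
  proof -
    obtain u w where uw: "u \<in> orbit_flag N g r" "w \<in> orbit_flag N g r" "x = E (T u)" "y = E (T w)"
      using xy unfolding flag_space_def image_image by blast
    have C: "u \<in> Cvec (Suc N)" "w \<in> Cvec (Suc N)" using uw(1,2) orbit_flag_subset_Cvec by blast+
    have "omega n x y = omega (Suc N) (P (E (T u))) (T w)"
      unfolding uw(3,4) using C by (intro omega_E E_in_Rvec T_in_Rvec)
    also have "\<dots> = Re (c * Omega (Suc N) u w)"
      using P_E[OF T_in_Rvec[OF C(1)]] omega_T[OF C] by simp
    finally have "omega n x y = Re (c * Omega (Suc N) u w)" .
    then show ?thesis using Omega_orbit_flag_isotropic[OF assms uw(1,2)] by simp
  qed
  then show ?thesis
    using subspace_flag_space flag_space_subset_Rvec dim_flag_space assms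
    by (simp add: isotropic_subspace_def)
qed

lemma two_in_Theta_even: "2 \<in> Theta_even n"
  using two_le_n by (simp add: Theta_even_def)

lemma Theta_even_le_rank: "i \<in> Theta_even n \<Longrightarrow> 2 * (i div 2) = i \<and> i \<le> Suc N"
  using rank by (auto simp: Theta_even_def)

lemma flag_space_in_Iso2: "g \<in> SL2C \<Longrightarrow> flag_space g 1 \<in> Iso2 n"
  using flag_space_isotropic[of g 1] Theta_even_le_rank[OF two_in_Theta_even]
  by (simp add: Iso2_def)

lemma flag_in_F_even:
  assumes "g \<in> SL2C"
  shows "flag g \<in> F_even n"
proof -
  have "isotropic_subspace n i (flag_space g (i div 2))" if "i \<in> Theta_even n" for i
    using flag_space_isotropic[OF assms, of "i div 2"] Theta_even_le_rank[OF that] by simp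
  then show ?thesis by (auto simp: F_even_def flag_def flag_space_mono div_le_mono)
qed

lemma exists_flag_space_not_antipodal_Iso2:
  assumes "isotropic_subspace n 2 V"
  shows "\<exists>g\<in>SL2C. \<not> direct_sum_full n V (omega_perp n (flag_space g 1))"
proof -
  have "\<not> V \<subseteq> {0}"
  proof
    assume "V \<subseteq> {0}"
    obtain B where "B \<subseteq> V" "rv.independent B" "V \<subseteq> rv.span B" "card B = rv.dim V"
      by (rule rv.basis_exists)
    have "0 \<notin> B" using \<open>rv.independent B\<close> rv.dependent_zero by blast
    then have "B = {}" using \<open>B \<subseteq> V\<close> \<open>V \<subseteq> {0}\<close> by blast
    then show False using \<open>card B = rv.dim V\<close> assms by (simp add: isotropic_subspace_def)
  qed
  then obtain v where "v \<in> V" "v \<noteq> 0" by blast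
  moreover have "V \<subseteq> Rvec (2 * n)" using assms by (simp add: isotropic_subspace_def)
  ultimately show ?thesis using exists_flag_space_not_antipodal by blast
qed

lemma maximally_antipodal_flag_spaces:
  "maximally_antipodal (Iso2 n) (antipodal_Iso2 n) ((\<lambda>g. flag_space g 1) ` SL2C)"
  unfolding maximally_antipodal_def
proof (intro conjI ballI impI)
  show "(\<lambda>g. flag_space g 1) ` SL2C \<subseteq> Iso2 n" using flag_space_in_Iso2 by blast
next
  fix A B assume "A \<in> (\<lambda>g. flag_space g 1) ` SL2C" "B \<in> (\<lambda>g. flag_space g 1) ` SL2C" "A \<noteq> B"
  then obtain g h where gh: "g \<in> SL2C" "h \<in> SL2C" "A = flag_space g 1" "B = flag_space h 1"
    and "flag_space g 1 \<noteq> flag_space h 1" by blast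
  then have "transverse g h" using flag_space_eq_if_not_transverse by metis
  then show "antipodal_Iso2 n A B"
    using gh flag_space_antipodal by (simp add: antipodal_Iso2_def)
next
  fix V assume "V \<in> Iso2 n"
  then show "\<exists>A\<in>(\<lambda>g. flag_space g 1) ` SL2C. \<not> antipodal_Iso2 n V A"
    using exists_flag_space_not_antipodal_Iso2 by (auto simp: Iso2_def antipodal_Iso2_def)
qed

lemma maximally_antipodal_flags: "maximally_antipodal (F_even n) (antipodal_even n) (flag ` SL2C)"
  unfolding maximally_antipodal_def
proof (intro conjI ballI impI)
  show "flag ` SL2C \<subseteq> F_even n" using flag_in_F_even by blast
next
  fix A B assume "A \<in> flag ` SL2C" "B \<in> flag ` SL2C" "A \<noteq> B"
  then obtain g h where gh: "g \<in> SL2C" "h \<in> SL2C" "A = flag g" "B = flag h"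
    and "flag g \<noteq> flag h" by blast
  then have "transverse g h"
    using flag_space_eq_if_not_transverse unfolding flag_def by metis
  have "direct_sum_full n (flag_space g (i div 2)) (omega_perp n (flag_space h (i div 2)))"
    if "i \<in> Theta_even n" for i
  proof -
    have "i div 2 \<le> Suc N" using Theta_even_le_rank[OF that] by (meson div_le_dividend order_trans)
    then show ?thesis using flag_space_antipodal[OF gh(1,2) \<open>transverse g h\<close>] by blast
  qed
  then show "antipodal_even n A B" by (simp add: antipodal_even_def gh(3,4) flag_def)
next
  fix F assume "F \<in> F_even n"
  then have "isotropic_subspace n 2 (F 2)" using two_in_Theta_even by (simp add: F_even_def)
  then obtain g where "g \<in> SL2C" "\<not> direct_sum_full n (F 2) (omega_perp n (flag_space g 1))"
    using exists_flag_space_not_antipodal_Iso2 by blast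
  moreover have "flag g 2 = flag_space g 1" using two_in_Theta_even by (simp add: flag_def)
  ultimately show "\<exists>A\<in>flag ` SL2C. \<not> antipodal_even n F A"
    using two_in_Theta_even by (metis antipodal_even_def image_eqI)
qed

lemma maximally_antipodal_limit_sets:
  assumes "Lambda_even n T = flag ` SL2C"
  shows "maximally_antipodal (Iso2 n) (antipodal_Iso2 n) (Lambda_Iso2 n T)
       \<and> maximally_antipodal (F_even n) (antipodal_even n) (Lambda_even n T)"
proof -
  have "Lambda_Iso2 n T = (\<lambda>g. flag_space g 1) ` SL2C"
    using two_in_Theta_even by (simp add: Lambda_Iso2_def assms image_image flag_def)
  then show ?thesis
    using maximally_antipodal_flag_spaces maximally_antipodal_flags assms by simp
qed

end


section \<open>The representation \<open>\<rho>\<^sub>n\<close>\<close>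

lemma block_incl_in_Rvec: "block_incl n y \<in> Rvec (2 * n)"
  by (auto simp: block_incl_def Rvec_def)

lemma block_proj_in_Rvec: "1 \<le> n \<Longrightarrow> block_proj n x \<in> Rvec (2 * (n - 1))"
  by (auto simp: block_proj_def Rvec_def)

lemma block_proj_block_incl:
  assumes "y \<in> Rvec (2 * (n - 1))" "2 \<le> n"
  shows "block_proj n (block_incl n y) = y"
proof
  fix i
  show "block_proj n (block_incl n y) i = y i"
    using assms by (cases "i = 0") (auto simp: block_proj_def block_incl_def Rvec_def)
qed

lemma block_mid_block_incl: "block_mid n (block_incl n y) = 0"
  by (auto simp: block_mid_def block_incl_def fun_eq_iff)

lemma block_incl_add: "block_incl n (x + y) = block_incl n x + block_incl n y"
  by (auto simp: block_incl_def fun_eq_iff)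

lemma block_incl_rscale: "block_incl n (rscale r x) = rscale r (block_incl n x)"
  by (auto simp: block_incl_def fun_eq_iff rscale_def)

lemma block_proj_add: "block_proj n (x + y) = block_proj n x + block_proj n y"
  by (auto simp: block_proj_def fun_eq_iff)

text \<open>Split \<open>{1..2m+2}\<close> into \<open>{1..m}\<close>, the two fixed coordinates \<open>m+1, m+2\<close> (where
  \<open>block_incl\<close> vanishes) and \<open>{m+3..2m+2}\<close>, which is \<open>{m+1..2m}\<close> shifted by two.\<close>
lemma omega_block_incl:
  assumes "1 \<le> m"
  shows "omega (Suc m) x (block_incl (Suc m) y) = omega m (block_proj (Suc m) x) y"
proof -
  define f where "f i = x (2 * Suc m + 1 - i) * (-1) ^ i * block_incl (Suc m) y i" for i
  define g where "g i = block_proj (Suc m) x (2 * m + 1 - i) * (-1) ^ i * y i" for i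
  have e2: "2 * Suc m = m + (m + 2)" by simp
  have "omega (Suc m) x (block_incl (Suc m) y) = sum f {1..m + (m + 2)}"
    unfolding omega_def f_def e2[symmetric] ..
  also have "\<dots> = sum f {1..m} + sum f {m+1..m + (m+2)}"
    by (rule sum.ub_add_nat) (use assms in auto)
  also have "sum f {m+1..m + (m+2)} = sum f {m+1..(m+1) + 1} + sum f {(m+1)+1+1..(m+1)+1 + m}"
  proof -
    have e: "m + (m+2) = ((m+1)+1)+m" by simp
    show ?thesis unfolding e by (rule sum.ub_add_nat) auto
  qed
  also have "sum f {m+1..(m+1) + 1} = 0"
    by (rule sum.neutral) (auto simp: f_def block_incl_def)
  also have "sum f {(m+1)+1+1..(m+1)+1 + m} = sum f {(m+1)+2..(2*m)+2}"
    by (rule arg_cong[where f="sum f"]) auto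
  also have "\<dots> = sum (\<lambda>j. f (j + 2)) {m+1..2*m}"
    by (rule sum.shift_bounds_cl_nat_ivl)
  also have "sum f {1..m} = sum g {1..m}"
    by (rule sum.cong) (auto simp: f_def g_def block_incl_def block_proj_def Suc_diff_le)
  also have "sum (\<lambda>j. f (j + 2)) {m+1..2*m} = sum g {m+1..m+m}"
    by (rule sum.cong) (auto simp: f_def g_def block_incl_def block_proj_def)
  also have "sum g {1..m} + (0 + sum g {m+1..m+m}) = sum g {1..m+m}"
    by (simp only: add_0_left, rule sum.ub_add_nat[symmetric]) (use assms in auto)
  also have "\<dots> = omega m (block_proj (Suc m) x) y"
    unfolding omega_def g_def mult_2 ..
  finally show ?thesis .
qed

text \<open>The subspace \<open>R^(2m)\<close>, \<open>m = 2 (n div 2)\<close>, of \<open>R^(2n)\<close> on which \<open>\<rho>\<^sub>n\<close> acts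
  through \<open>\<rho>\<^sub>m\<close>.\<close>
definition core_incl :: "nat \<Rightarrow> (nat \<Rightarrow> real) \<Rightarrow> (nat \<Rightarrow> real)" where
  "core_incl n = (if even n then id else block_incl n)"

definition core_proj :: "nat \<Rightarrow> (nat \<Rightarrow> real) \<Rightarrow> (nat \<Rightarrow> real)" where
  "core_proj n = (if even n then id else block_proj n)"

lemma symplectic_model_core:
  assumes "2 \<le> n" "Suc N = 2 * (n div 2)" "symplectic_identification (Suc N) c T"
  shows "symplectic_model n N c T (core_incl n) (core_proj n)"
proof (cases "even n")
  case True
  then have "Suc N = n" using assms(2) by presburger
  then show ?thesis
    using assms True by unfold_locales (simp_all add: core_incl_def core_proj_def)
next
  case False
  then have N: "Suc N = n - 1" using assms(2) by presburger
  then have n: "n = Suc (Suc N)" using assms(1) by simp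
  show ?thesis
  proof unfold_locales
    fix x y :: "nat \<Rightarrow> real" and r :: real
    show "core_incl n (x + y) = core_incl n x + core_incl n y"
      by (simp add: core_incl_def block_incl_add)
    show "core_incl n (rscale r x) = rscale r (core_incl n x)"
      by (simp add: core_incl_def block_incl_rscale)
    show "core_proj n (x + y) = core_proj n x + core_proj n y"
      by (simp add: core_proj_def block_proj_add)
    show "core_incl n x \<in> Rvec (2 * n)"
      using False by (simp add: core_incl_def block_incl_in_Rvec)
    show "core_proj n x \<in> Rvec (2 * Suc N)"
      using False block_proj_in_Rvec[of n x] by (simp add: core_proj_def n)
    show "x \<in> Rvec (2 * Suc N) \<Longrightarrow> core_proj n (core_incl n x) = x"
      using False assms(1) block_proj_block_incl[of x n] by (simp add: core_proj_def core_incl_def N)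
    show "omega n x (core_incl n y) = omega (Suc N) (core_proj n x) y"
      using False omega_block_incl[of "Suc N" x y] by (simp add: core_proj_def core_incl_def n)
  qed (use assms in auto)
qed

lemma rho_even_act_image:
  assumes "bij_betw T (Cvec m) (Rvec (2 * m))" "S \<subseteq> Cvec m"
  shows "rho_even_act m T g ` T ` S = T ` sym_act m g ` S"
proof -
  have "rho_even_act m T g (T u) = T (sym_act m g u)" if "u \<in> S" for u
  proof -
    have u: "u \<in> Cvec m" using that assms(2) by auto
    then have "T u \<in> Rvec (2 * m)" using assms(1) by (auto simp: bij_betw_def)
    moreover have "the_inv_into (Cvec m) T (T u) = u"
      using assms(1) u by (intro the_inv_into_f_f) (auto simp: bij_betw_def)
    ultimately show ?thesis by (simp add: rho_even_act_def)
  qed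
  then show ?thesis by (auto simp: image_iff)
qed

lemma block_embed_image:
  assumes "2 \<le> n" "Y \<subseteq> Rvec (2 * (n - 1))"
  shows "block_embed n h ` block_incl n ` Y = block_incl n ` h ` Y"
proof -
  have "block_embed n h (block_incl n y) = block_incl n (h y)" if "y \<in> Y" for y
    using that assms block_incl_in_Rvec[of n y]
    by (simp add: block_embed_def block_proj_block_incl block_mid_block_incl subset_iff)
  then show ?thesis by (auto simp: image_iff)
qed

lemma rho_act_core_incl_image:
  assumes "2 \<le> n" "bij_betw T (Cvec m) (Rvec (2 * m))" "m = 2 * (n div 2)" "S \<subseteq> Cvec m"
  shows "rho_act n T g ` core_incl n ` T ` S = core_incl n ` T ` sym_act m g ` S"
proof (cases "even n")
  case True
  then show ?thesis
    using rho_even_act_image[OF assms(2,4)] assms(3) by (simp add: rho_act_def core_incl_def)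
next
  case False
  then have m: "m = n - 1" using assms(3) by presburger
  have "T ` S \<subseteq> Rvec (2 * (n - 1))" using assms(2,4) m by (auto simp: bij_betw_def)
  then show ?thesis
    using False m block_embed_image[OF assms(1)] rho_even_act_image[OF assms(2,4)]
    by (simp add: rho_act_def core_incl_def)
qed

lemma xi0_eq_core_incl_image:
  "Suc N = 2 * (n div 2) \<Longrightarrow> i \<in> Theta_even n \<Longrightarrow> xi0 n T i = core_incl n ` T ` std_flag N (i div 2)"
  by (simp add: xi0_def std_flag_def core_incl_def)

theorem mainTheorem13:
  fixes n :: nat and c :: complex and T :: "(nat \<Rightarrow> complex) \<Rightarrow> (nat \<Rightarrow> real)"
  assumes "n \<ge> 2"
    and "symplectic_identification (2 * (n div 2)) c T"
  shows "maximally_antipodal (Iso2 n) (antipodal_Iso2 n) (Lambda_Iso2 n T)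
       \<and> maximally_antipodal (F_even n) (antipodal_even n) (Lambda_even n T)"
proof -
  define N where "N = 2 * (n div 2) - 1"
  have rank: "Suc N = 2 * (n div 2)" using assms(1) unfolding N_def by presburger
  interpret symplectic_model n N c T "core_incl n" "core_proj n"
    using assms rank by (intro symplectic_model_core) simp_all
  have "rho_act n T g ` xi0 n T i = flag g i" for g i
  proof (cases "i \<in> Theta_even n")
    case True
    then show ?thesis
      using rho_act_core_incl_image[OF assms(1) bij_T rank std_flag_subset_Cvec]
      by (simp add: xi0_eq_core_incl_image[OF rank] flag_def flag_space_def orbit_flag_def)
  qed (simp add: xi0_def flag_def)
  then have "Lambda_even n T = flag ` SL2C" by (auto simp: Lambda_even_def fun_eq_iff)
  then show ?thesis by (rule maximally_antipodal_limit_sets)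
qed

end
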